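(* Let $\Gamma$ be a countable discrete group and $\mu$ a probability measure on $\Gamma$. Let $\eta\in\mathbb T$ and let $0\neq T\in\mathcal B(\ell^2(\Gamma))$ satisfy $\mathcal P_\mu(T)=\eta T$. Then there exists a nonzero $f\in\ell^\infty(\Gamma)$ with $f*\mu=\eta f$. In particular, if $\mu$ is symmetric and generating, then $-1$ is an eigenvalue of $\mathcal P_\mu$ on $\mathcal B(\ell^2(\Gamma))$ if and only if there exists a nonzero $f\in\ell^\infty(\Gamma)$ with $f*\mu=-f$.
   Context: $\rho$ denotes the right regular representation of $\Gamma$ on $\ell^2(\Gamma)$, $\rho_g\delta_x=\delta_{xg^{-1}}$. The Markov operator $\mathcal P_\mu:\mathcal B(\ell^2(\Gamma))\to\mathcal B(\ell^2(\Gamma))$ is $\mathcal P_\mu(T)=\sum_{g\in\Gamma}\mu(g)\rho_gT\rho_g^*$. For $f\in\ell^\infty(\Gamma)$, $(f*\mu)(g)=\sum_{h\in\Gamma}\mu(h)f(gh)$; identifying $f$ with the multiplication operator $M_f$, one has $\mathcal P_\mu(M_f)=M_{f*\mu}$. A measure $\mu$ is symmetric if $\mu(g)=\mu(g^{-1})$ for all $g$, and generating if its support generates $\Gamma$ as a group. *)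

theory Defs
  imports "HOL-Analysis.Analysis" "HOL-Library.Countable"
begin

text \<open>The group \<Gamma> is a type of class group_add (possibly non-commutative), written
additively: the product g h is g + h, the inverse g^-1 is - g, the unit is 0.
Vectors of l2(\<Gamma>) and elements of l-infinity(\<Gamma>) are functions \<Gamma> \<Rightarrow> complex.\<close>

definition l2 :: "('g \<Rightarrow> complex) set" where
  "l2 = {\<xi>. (\<lambda>x. (cmod (\<xi> x))\<^sup>2) summable_on UNIV}"

definition l2norm :: "('g \<Rightarrow> complex) \<Rightarrow> real" where
  "l2norm \<xi> = sqrt (\<Sum>\<^sub>\<infinity>x. (cmod (\<xi> x))\<^sup>2)"

definition linfty :: "('g \<Rightarrow> complex) set" where
  "linfty = {f. \<exists>B. \<forall>x. cmod (f x) \<le> B}"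

text \<open>Bounded linear operators on l2(\<Gamma>), represented by maps defined on l2 (values off l2 are irrelevant).\<close>
definition bounded_op :: "(('g \<Rightarrow> complex) \<Rightarrow> ('g \<Rightarrow> complex)) \<Rightarrow> bool" where
  "bounded_op T \<longleftrightarrow>
     (\<forall>\<xi>\<in>l2. T \<xi> \<in> l2) \<and>
     (\<forall>\<xi>\<in>l2. \<forall>\<zeta>\<in>l2. \<forall>a b. T (\<lambda>x. a * \<xi> x + b * \<zeta> x) = (\<lambda>x. a * T \<xi> x + b * T \<zeta> x)) \<and>
     (\<exists>C. \<forall>\<xi>\<in>l2. l2norm (T \<xi>) \<le> C * l2norm \<xi>)"

text \<open>Right regular representation: rho_g delta_y = delta_(y g^-1), i.e. (rho_g \<xi>)(x) = \<xi>(x g).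
Its adjoint rho_g^* is rho_(g^-1) (rho is unitary).\<close>
definition rho :: "'g::group_add \<Rightarrow> ('g \<Rightarrow> complex) \<Rightarrow> ('g \<Rightarrow> complex)" where
  "rho g \<xi> = (\<lambda>x. \<xi> (x + g))"

text \<open>Markov operator P_mu(T) = sum_g mu(g) rho_g T rho_g^*. The series converges absolutely in
operator norm; its value applied to \<xi> is computed coordinatewise.\<close>
definition markov_op :: "('g::group_add \<Rightarrow> real) \<Rightarrow> (('g \<Rightarrow> complex) \<Rightarrow> ('g \<Rightarrow> complex))
    \<Rightarrow> ('g \<Rightarrow> complex) \<Rightarrow> ('g \<Rightarrow> complex)" where
  "markov_op \<mu> T \<xi> = (\<lambda>x. \<Sum>\<^sub>\<infinity>g. complex_of_real (\<mu> g) * rho g (T (rho (- g) \<xi>)) x)"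

definition conv_mu :: "('g::group_add \<Rightarrow> complex) \<Rightarrow> ('g \<Rightarrow> real) \<Rightarrow> ('g \<Rightarrow> complex)" where
  "conv_mu f \<mu> = (\<lambda>g. \<Sum>\<^sub>\<infinity>h. complex_of_real (\<mu> h) * f (g + h))"

definition prob_on :: "('g \<Rightarrow> real) \<Rightarrow> bool" where
  "prob_on \<mu> \<longleftrightarrow> (\<forall>g. \<mu> g \<ge> 0) \<and> (\<mu> has_sum 1) UNIV"

definition symmetric_measure :: "('g::group_add \<Rightarrow> real) \<Rightarrow> bool" where
  "symmetric_measure \<mu> \<longleftrightarrow> (\<forall>g. \<mu> g = \<mu> (- g))"

inductive_set gen_subgroup :: "'g::group_add set \<Rightarrow> 'g set" for S where
  gen_zero: "0 \<in> gen_subgroup S"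
| gen_base: "s \<in> S \<Longrightarrow> s \<in> gen_subgroup S"
| gen_add: "a \<in> gen_subgroup S \<Longrightarrow> b \<in> gen_subgroup S \<Longrightarrow> a + b \<in> gen_subgroup S"
| gen_minus: "a \<in> gen_subgroup S \<Longrightarrow> - a \<in> gen_subgroup S"

definition generating :: "('g::group_add \<Rightarrow> real) \<Rightarrow> bool" where
  "generating \<mu> \<longleftrightarrow> gen_subgroup {g. \<mu> g \<noteq> 0} = UNIV"

definition markov_eigenvalue :: "('g::group_add \<Rightarrow> real) \<Rightarrow> complex \<Rightarrow> bool" where
  "markov_eigenvalue \<mu> \<eta> \<longleftrightarrow>
     (\<exists>T. bounded_op T \<and> (\<exists>\<xi>\<in>l2. T \<xi> \<noteq> (\<lambda>_. 0)) \<and>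
          (\<forall>\<xi>\<in>l2. markov_op \<mu> T \<xi> = (\<lambda>x. \<eta> * T \<xi> x)))"

end

theory Submission
  imports Defs
begin

text \<open>
  If \<open>P\<^sub>\<mu>(T) = \<eta> T\<close> with \<open>T \<noteq> 0\<close>, some matrix entry \<open>\<langle>T \<delta>\<^sub>z, \<delta>\<^sub>x\<rangle>\<close> is nonzero, because a
  bounded operator vanishing on all finitely supported vectors vanishes on \<open>\<ell>\<^sup>2\<close>. Conjugation
  by \<open>\<rho>\<^sub>g\<close> shifts matrix entries along diagonals, so the diagonal through that entry,
  \<open>f(w) = \<langle>T \<delta>\<^sub>a\<^sub>+\<^sub>w, \<delta>\<^sub>w\<rangle>\<close>, is a bounded function with \<open>f * \<mu> = \<eta> f\<close>. Conversely, the
  multiplication operator \<open>M\<^sub>f\<close> of a bounded \<open>f\<close> with \<open>f * \<mu> = \<eta> f\<close> is an eigenvector, as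
  \<open>P\<^sub>\<mu>(M\<^sub>f) = M\<^sub>f\<^sub>*\<^sub>\<mu>\<close>.
\<close>

definition delta :: "'g \<Rightarrow> 'g \<Rightarrow> complex" where
  "delta z = (\<lambda>y. if y = z then 1 else 0)"

lemma l2norm_nonneg: "l2norm \<xi> \<ge> 0"
  unfolding l2norm_def by (simp add: infsum_nonneg)

lemma l2_dominated:
  assumes "\<xi> \<in> l2" and dom: "\<And>x. cmod (\<zeta> x) \<le> B * cmod (\<xi> x)"
  shows "\<zeta> \<in> l2" and "l2norm \<zeta> \<le> \<bar>B\<bar> * l2norm \<xi>"
proof -
  let ?g = "\<lambda>x. (cmod (\<xi> x))\<^sup>2" and ?h = "\<lambda>x. (cmod (\<zeta> x))\<^sup>2"
  have le: "?h x \<le> B\<^sup>2 * ?g x" for x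
    using power_mono[OF dom, of x 2] by (simp add: power_mult_distrib)
  have bg: "(\<lambda>x. B\<^sup>2 * ?g x) summable_on UNIV"
    using assms(1) by (simp add: l2_def summable_on_cmult_right)
  have h: "?h summable_on UNIV"
    by (rule summable_on_comparison_test[OF bg]) (simp_all add: le)
  then show "\<zeta> \<in> l2" by (simp add: l2_def)
  have "infsum ?h UNIV \<le> B\<^sup>2 * infsum ?g UNIV"
    using infsum_mono[OF h bg le] by (simp add: infsum_cmult_right')
  then have "sqrt (infsum ?h UNIV) \<le> sqrt (B\<^sup>2) * sqrt (infsum ?g UNIV)"
    unfolding real_sqrt_mult[symmetric] by (rule real_sqrt_le_mono)
  then show "l2norm \<zeta> \<le> \<bar>B\<bar> * l2norm \<xi>" by (simp add: l2norm_def)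
qed

lemma l2_restrict:
  assumes "\<xi> \<in> l2" shows "(\<lambda>x. if P x then \<xi> x else 0) \<in> l2"
  by (rule l2_dominated(1)[OF assms, of _ 1]) simp

lemma norm_le_l2norm:
  assumes "\<xi> \<in> l2" shows "cmod (\<xi> x) \<le> l2norm \<xi>"
proof -
  have "sum (\<lambda>x. (cmod (\<xi> x))\<^sup>2) {x} \<le> (\<Sum>\<^sub>\<infinity>x. (cmod (\<xi> x))\<^sup>2)"
    using assms by (intro finite_sum_le_infsum) (auto simp: l2_def)
  then show ?thesis unfolding l2norm_def by (simp add: real_le_rsqrt)
qed

lemma delta_in_l2: "delta z \<in> l2"
  and l2norm_delta: "l2norm (delta z) = 1"
proof -
  have sq: "(\<lambda>x. (cmod (delta z x))\<^sup>2) = (\<lambda>x. if x = z then 1 else 0)"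
    by (auto simp: delta_def)
  let ?e = "\<lambda>x. if x = z then 1 else 0 :: real"
  have "(?e has_sum 1) {z}"
    using has_sum_finite[of "{z}" ?e] by simp
  moreover have "(?e has_sum 1) UNIV \<longleftrightarrow> (?e has_sum 1) {z}"
    by (rule has_sum_cong_neutral) auto
  ultimately have "(?e has_sum 1) UNIV" by simp
  then show "delta z \<in> l2" "l2norm (delta z) = 1"
    by (simp_all add: l2_def l2norm_def sq has_sum_imp_summable infsumI)
qed

lemma l2_finite_tail_small:
  assumes "\<xi> \<in> l2" "\<epsilon> > 0"
  obtains F where "finite F" "l2norm (\<lambda>x. if x \<in> F then 0 else \<xi> x) < \<epsilon>"
proof -
  let ?g = "\<lambda>x. (cmod (\<xi> x))\<^sup>2"
  have g: "?g summable_on UNIV" using assms(1) by (simp add: l2_def)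
  obtain F where F: "finite F" "dist (sum ?g F) (infsum ?g UNIV) \<le> \<epsilon>\<^sup>2 / 2"
    using infsum_finite_approximation[OF g, of "\<epsilon>\<^sup>2 / 2"] assms(2) by auto
  have "(\<Sum>\<^sub>\<infinity>x. (cmod (if x \<in> F then 0 else \<xi> x))\<^sup>2) = infsum ?g (UNIV - F)"
    by (rule infsum_cong_neutral) auto
  also have "\<dots> = infsum ?g UNIV - sum ?g F"
    using g F(1) by (simp add: infsum_Diff summable_on_subset_banach)
  also have "\<dots> < \<epsilon>\<^sup>2"
    using F(2) \<open>\<epsilon> > 0\<close> zero_less_power[of \<epsilon> 2] unfolding dist_real_def by linarith
  finally have "l2norm (\<lambda>x. if x \<in> F then 0 else \<xi> x) < sqrt (\<epsilon>\<^sup>2)"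
    unfolding l2norm_def by (simp only: real_sqrt_less_iff)
  with assms(2) F(1) that show thesis by simp
qed

lemma bounded_op_l2: "bounded_op T \<Longrightarrow> \<xi> \<in> l2 \<Longrightarrow> T \<xi> \<in> l2"
  unfolding bounded_op_def by blast

lemma bounded_op_linear:
  "bounded_op T \<Longrightarrow> \<xi> \<in> l2 \<Longrightarrow> \<zeta> \<in> l2 \<Longrightarrow>
    T (\<lambda>x. a * \<xi> x + b * \<zeta> x) = (\<lambda>x. a * T \<xi> x + b * T \<zeta> x)"
  unfolding bounded_op_def by blast

lemma bounded_op_zero: "bounded_op T \<Longrightarrow> T (\<lambda>_. 0) = (\<lambda>_. 0)"
  using bounded_op_linear[of T "\<lambda>_. 0" "\<lambda>_. 0" 0 0] by (simp add: l2_def)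

lemma bounded_opE:
  assumes "bounded_op T"
  obtains C where "\<And>\<xi>. \<xi> \<in> l2 \<Longrightarrow> l2norm (T \<xi>) \<le> C * l2norm \<xi>"
  using assms unfolding bounded_op_def by blast

lemma bounded_op_finite_support_zero:
  assumes T: "bounded_op T" and zero: "\<And>z. T (delta z) = (\<lambda>_. 0)"
    and "\<xi> \<in> l2" "finite F"
  shows "T (\<lambda>x. if x \<in> F then \<xi> x else 0) = (\<lambda>_. 0)"
  using \<open>finite F\<close>
proof (induction F rule: finite_induct)
  case empty
  show ?case using bounded_op_zero[OF T] by simp
next
  case (insert z F)
  have "(\<lambda>x. if x \<in> insert z F then \<xi> x else 0)
      = (\<lambda>x. 1 * (if x \<in> F then \<xi> x else 0) + \<xi> z * delta z x)"
    using insert(2) by (auto simp: delta_def)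
  moreover have "T (\<lambda>x. 1 * (if x \<in> F then \<xi> x else 0) + \<xi> z * delta z x)
      = (\<lambda>x. 1 * T (\<lambda>x. if x \<in> F then \<xi> x else 0) x + \<xi> z * T (delta z) x)"
    by (rule bounded_op_linear[OF T l2_restrict[OF \<open>\<xi> \<in> l2\<close>] delta_in_l2])
  ultimately show ?case using insert(3) zero by simp
qed

lemma bounded_op_delta_nonzero:
  assumes T: "bounded_op T" and "\<xi> \<in> l2" "T \<xi> \<noteq> (\<lambda>_. 0)"
  obtains z where "T (delta z) \<noteq> (\<lambda>_. 0)"
proof (rule ccontr)
  assume "\<not> thesis"
  with that have zero: "\<And>z. T (delta z) = (\<lambda>_. 0)" by blast
  obtain x where "T \<xi> x \<noteq> 0" using assms(3) by auto
  define c where "c = cmod (T \<xi> x)"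
  obtain C where C: "\<And>\<zeta>. \<zeta> \<in> l2 \<Longrightarrow> l2norm (T \<zeta>) \<le> C * l2norm \<zeta>"
    using bounded_opE[OF T] by blast
  have "c > 0" using \<open>T \<xi> x \<noteq> 0\<close> by (simp add: c_def)
  then obtain F where "finite F"
    and rest_small: "l2norm (\<lambda>x. if x \<in> F then 0 else \<xi> x) < c / (\<bar>C\<bar> + 1)"
    using l2_finite_tail_small[OF \<open>\<xi> \<in> l2\<close>, of "c / (\<bar>C\<bar> + 1)"] by auto
  define trunc where "trunc = (\<lambda>x. if x \<in> F then \<xi> x else 0)"
  define rest where "rest = (\<lambda>x. if x \<in> F then 0 else \<xi> x)"
  have l2: "trunc \<in> l2" "rest \<in> l2"
    unfolding trunc_def rest_def using l2_dominated(1)[OF \<open>\<xi> \<in> l2\<close>, of _ 1] by auto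
  have "\<xi> = (\<lambda>x. 1 * trunc x + 1 * rest x)" by (auto simp: trunc_def rest_def)
  then have "T \<xi> = T rest"
    using bounded_op_linear[OF T l2, of 1 1]
      bounded_op_finite_support_zero[OF T zero \<open>\<xi> \<in> l2\<close> \<open>finite F\<close>]
    by (simp add: trunc_def)
  then have "c \<le> l2norm (T rest)"
    using norm_le_l2norm[OF bounded_op_l2[OF T l2(2)], of x] by (simp add: c_def)
  also have "\<dots> \<le> C * l2norm rest" by (rule C[OF l2(2)])
  also have "\<dots> \<le> \<bar>C\<bar> * l2norm rest" by (intro mult_right_mono) (simp_all add: l2norm_nonneg)
  also have "\<dots> \<le> \<bar>C\<bar> * (c / (\<bar>C\<bar> + 1))"
    using rest_small unfolding rest_def by (intro mult_left_mono) simp_all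
  also have "\<dots> < c" using \<open>c > 0\<close> by (simp add: field_simps)
  finally show False by simp
qed

definition diagonal ::
    "(('g::group_add \<Rightarrow> complex) \<Rightarrow> ('g \<Rightarrow> complex)) \<Rightarrow> 'g \<Rightarrow> 'g \<Rightarrow> complex" where
  "diagonal T a = (\<lambda>w. T (delta (a + w)) w)"

lemma diagonal_in_linfty:
  assumes "bounded_op T" shows "diagonal T a \<in> linfty"
proof -
  obtain C where C: "\<And>\<xi>. \<xi> \<in> l2 \<Longrightarrow> l2norm (T \<xi>) \<le> C * l2norm \<xi>"
    using bounded_opE[OF assms] by blast
  have "cmod (diagonal T a w) \<le> C" for w
    using order_trans[OF norm_le_l2norm[OF bounded_op_l2[OF assms delta_in_l2]] C[OF delta_in_l2]]
    by (simp add: diagonal_def l2norm_delta)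
  then show ?thesis by (auto simp: linfty_def)
qed

lemma rho_minus_delta: "rho (- g) (delta z) = delta (z + g)"
  by (auto simp: rho_def delta_def fun_eq_iff diff_conv_add_uminus[symmetric] diff_eq_eq)

lemma markov_op_diagonal:
  "markov_op \<mu> T (delta (a + y)) y = conv_mu (diagonal T a) \<mu> y"
  unfolding markov_op_def conv_mu_def diagonal_def rho_minus_delta by (simp add: rho_def add.assoc)

lemma markov_op_multiplication:
  "markov_op \<mu> (\<lambda>\<xi> x. f x * \<xi> x) \<xi> = (\<lambda>x. conv_mu f \<mu> x * \<xi> x)"
  unfolding markov_op_def conv_mu_def rho_def
  by (simp add: add.assoc mult.assoc infsum_cmult_left'[symmetric])

lemma bounded_op_multiplication:
  assumes "f \<in> linfty" shows "bounded_op (\<lambda>\<xi> x. f x * \<xi> x)"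
proof -
  obtain B where "\<And>x. cmod (f x) \<le> B" using assms by (auto simp: linfty_def)
  then have dom: "cmod (f x * \<xi> x) \<le> B * cmod (\<xi> x)" for \<xi> x
    by (simp add: norm_mult mult_right_mono)
  have "(\<lambda>x. f x * \<xi> x) \<in> l2" "l2norm (\<lambda>x. f x * \<xi> x) \<le> \<bar>B\<bar> * l2norm \<xi>"
    if "\<xi> \<in> l2" for \<xi>
    using l2_dominated[OF that dom[where \<xi>=\<xi>]] by auto
  then show ?thesis
    unfolding bounded_op_def by (fastforce simp: algebra_simps intro!: exI[of _ "\<bar>B\<bar>"])
qed

theorem markov_eigenvalue_iff_bounded_eigenfunction:
  "markov_eigenvalue \<mu> \<eta> \<longleftrightarrow> (\<exists>f\<in>linfty. f \<noteq> (\<lambda>_. 0) \<and> conv_mu f \<mu> = (\<lambda>x. \<eta> * f x))"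
proof
  assume "markov_eigenvalue \<mu> \<eta>"
  then obtain T \<xi> where T: "bounded_op T" and "\<xi> \<in> l2" "T \<xi> \<noteq> (\<lambda>_. 0)"
    and eigen: "\<And>\<zeta>. \<zeta> \<in> l2 \<Longrightarrow> markov_op \<mu> T \<zeta> = (\<lambda>x. \<eta> * T \<zeta> x)"
    unfolding markov_eigenvalue_def by blast
  obtain z where "T (delta z) \<noteq> (\<lambda>_. 0)"
    using bounded_op_delta_nonzero[OF T \<open>\<xi> \<in> l2\<close> \<open>T \<xi> \<noteq> (\<lambda>_. 0)\<close>] .
  then obtain x where "T (delta z) x \<noteq> 0" by auto
  define f where "f = diagonal T (z - x)"
  have "f x \<noteq> 0" using \<open>T (delta z) x \<noteq> 0\<close> by (simp add: f_def diagonal_def)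
  moreover have "conv_mu f \<mu> y = \<eta> * f y" for y
    using eigen[OF delta_in_l2, of "z - x + y"] markov_op_diagonal[of \<mu> T "z - x" y]
    by (simp add: f_def diagonal_def)
  moreover have "f \<in> linfty" unfolding f_def by (rule diagonal_in_linfty[OF T])
  ultimately show "\<exists>f\<in>linfty. f \<noteq> (\<lambda>_. 0) \<and> conv_mu f \<mu> = (\<lambda>x. \<eta> * f x)"
    by (intro bexI[of _ f] conjI ext) auto
next
  assume "\<exists>f\<in>linfty. f \<noteq> (\<lambda>_. 0) \<and> conv_mu f \<mu> = (\<lambda>x. \<eta> * f x)"
  then obtain f where f: "f \<in> linfty" "f \<noteq> (\<lambda>_. 0)" "conv_mu f \<mu> = (\<lambda>x. \<eta> * f x)"
    by blast
  then obtain x where "f x \<noteq> 0" by auto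
  show "markov_eigenvalue \<mu> \<eta>"
    unfolding markov_eigenvalue_def
  proof (intro exI[of _ "\<lambda>\<xi> y. f y * \<xi> y"] conjI bexI[of _ "delta x"] ballI)
    show "bounded_op (\<lambda>\<xi> y. f y * \<xi> y)" by (rule bounded_op_multiplication[OF f(1)])
    show "(\<lambda>y. f y * delta x y) \<noteq> (\<lambda>_. 0)"
      using \<open>f x \<noteq> 0\<close> by (auto simp: delta_def fun_eq_iff)
    show "markov_op \<mu> (\<lambda>\<xi> y. f y * \<xi> y) \<xi> = (\<lambda>y. \<eta> * (f y * \<xi> y))" for \<xi>
      by (simp add: markov_op_multiplication f(3) mult.assoc)
  qed (rule delta_in_l2)
qed

theorem proposition2p1:
  fixes \<mu> :: "'g::{group_add, countable} \<Rightarrow> real"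
    and \<eta> :: complex
    and T :: "('g \<Rightarrow> complex) \<Rightarrow> ('g \<Rightarrow> complex)"
  assumes "prob_on \<mu>"
  shows "((cmod \<eta> = 1 \<and> bounded_op T \<and> (\<exists>\<xi>\<in>l2. T \<xi> \<noteq> (\<lambda>_. 0)) \<and>
           (\<forall>\<xi>\<in>l2. markov_op \<mu> T \<xi> = (\<lambda>x. \<eta> * T \<xi> x)))
         \<longrightarrow> (\<exists>f\<in>linfty. f \<noteq> (\<lambda>_. 0) \<and> conv_mu f \<mu> = (\<lambda>x. \<eta> * f x)))
         \<and> (symmetric_measure \<mu> \<and> generating \<mu> \<longrightarrow>
          (markov_eigenvalue \<mu> (-1) \<longleftrightarrow>
           (\<exists>f\<in>linfty. f \<noteq> (\<lambda>_. 0) \<and> conv_mu f \<mu> = (\<lambda>x. - f x))))"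
  using markov_eigenvalue_iff_bounded_eigenfunction[of \<mu> \<eta>]
    markov_eigenvalue_iff_bounded_eigenfunction[of \<mu> "-1"]
  unfolding markov_eigenvalue_def by auto

end
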